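(* Let $Q^{(N)}(t)=\sqrt N\,(X^{(N)}(t)-\pi)$. If $\limsup_{N\to\infty}\mathbb E\big[\|Q^{(N)}(0)\|_2^2\big]<\infty$, then $$\limsup_{N\to\infty}\ \sup_{t\ge0}\ \mathbb E\big[\|Q^{(N)}(t)\|_2^2\big]<\infty .$$ Consequently, if $X^{(N)}(\infty)$ denotes a random vector distributed according to the (unique) stationary distribution of the Markov process $X^{(N)}$ and $Z^{(N)}(\infty)=\sqrt N\,(X^{(N)}(\infty)-\pi)$, then $\limsup_{N\to\infty}\mathbb E\big[\|Z^{(N)}(\infty)\|_2^2\big]<\infty$.
   Context: Model: fix integers $C\ge1$, $d\ge1$ and reals $\sigma>0$, $\beta\in\mathbb R$. For each $N\ge1$ (large enough that $\lambda^{(N)}:=\sigma-\beta/\sqrt N>0$) there are $N$ servers, each able to process at most $C$ jobs simultaneously. Jobs arrive according to a Poisson process of rate $N\lambda^{(N)}$. At each arrival, $d$ servers are sampled uniformly at random with replacement and the job is routed to the sampled server with the fewest jobs in progress (ties broken uniformly at random); if that server has $C$ jobs the job is lost, otherwise it starts service immediately. Service times are i.i.d. exponential with mean $1$ and all jobs at a server are processed in parallel (a server with $n$ jobs completes jobs at total rate $n$). $X^{(N)}_n(t)$ is the fraction of servers with at least $n$ jobs at time $t$, $0\le n\le C$; $X^{(N)}(t)$ takes values in $\mathbb U=\{u\in\mathbb R^{C+1}:1=u_0\ge\cdots\ge u_C\ge0\}$. $\|\cdot\|_2$ is the Euclidean norm. $\pi\in\mathbb U$ is the unique fixed point of the mean-field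 ODE $\frac{d}{dt}x_n=\sigma(x_{n-1}^d-x_n^d)-n(x_n-x_{n+1})$ ($1\le n\le C$, $x_0\equiv1$, $x_{C+1}\equiv0$), i.e. $\pi_0=1$, $\sigma(\pi_{n-1}^d-\pi_n^d)=n(\pi_n-\pi_{n+1})$ for $1\le n\le C$, $\pi_{C+1}=0$. *)

theory Defs
  imports "HOL-Analysis.Analysis"
begin

definition lam :: "real \<Rightarrow> real \<Rightarrow> nat \<Rightarrow> real" where
  "lam \<sigma> \<beta> N = \<sigma> - \<beta> / sqrt (real N)"

text \<open>State space of the N-th system: occupancy counts m n = number of servers with at
  least n jobs (0 <= n <= C), so that X^(N)_n = m n / N.  Entries beyond C are 0.\<close>
definition states :: "nat \<Rightarrow> nat \<Rightarrow> (nat \<Rightarrow> nat) set" where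
  "states C N = {m. m 0 = N \<and> (\<forall>n<C. m (Suc n) \<le> m n) \<and> (\<forall>n>C. m n = 0)}"

text \<open>Transition rate from state m to state m' of the CTMC X^(N) (power-of-d routing,
  capacity C, parallel exponential service).  An arrival is routed to a server with exactly
  n-1 jobs with probability x_{n-1}^d - x_n^d; a server with exactly n jobs completes a job
  at rate n.\<close>
definition rate :: "nat \<Rightarrow> nat \<Rightarrow> real \<Rightarrow> real \<Rightarrow> nat \<Rightarrow> (nat \<Rightarrow> nat) \<Rightarrow> (nat \<Rightarrow> nat) \<Rightarrow> real" where
  "rate C d \<sigma> \<beta> N m m' =
     (\<Sum>n\<in>{1..C}. if m n < m (n - 1) \<and> m' = m(n := Suc (m n))
        then real N * lam \<sigma> \<beta> N *
             ((real (m (n - 1)) / real N) ^ d - (real (m n) / real N) ^ d)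
        else 0)
   + (\<Sum>n\<in>{1..C}. if m (Suc n) < m n \<and> m' = m(n := m n - 1)
        then real n * (real (m n) - real (m (Suc n)))
        else 0)"

definition is_distr :: "(nat \<Rightarrow> nat) set \<Rightarrow> ((nat \<Rightarrow> nat) \<Rightarrow> real) \<Rightarrow> bool" where
  "is_distr S \<mu> \<longleftrightarrow> (\<forall>m. 0 \<le> \<mu> m) \<and> (\<forall>m. m \<notin> S \<longrightarrow> \<mu> m = 0) \<and> sum \<mu> S = 1"

text \<open>p t m = P(state at time t = m): the law of X^(N)(t) started from the initial law mu,
  characterised as the (unique) solution of the Kolmogorov forward equations on [0,oo).\<close>
definition law_process ::
  "nat \<Rightarrow> nat \<Rightarrow> real \<Rightarrow> real \<Rightarrow> nat \<Rightarrow> ((nat \<Rightarrow> nat) \<Rightarrow> real) \<Rightarrow> (real \<Rightarrow> (nat \<Rightarrow> nat) \<Rightarrow> real) \<Rightarrow> bool" where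
  "law_process C d \<sigma> \<beta> N \<mu> p \<longleftrightarrow>
     p 0 = \<mu> \<and>
     (\<forall>t\<ge>0. \<forall>m. m \<notin> states C N \<longrightarrow> p t m = 0) \<and>
     (\<forall>t\<ge>0. \<forall>m\<in>states C N.
        ((\<lambda>s. p s m) has_real_derivative
           ((\<Sum>m'\<in>states C N. p t m' * rate C d \<sigma> \<beta> N m' m)
            - p t m * (\<Sum>m'\<in>states C N. rate C d \<sigma> \<beta> N m m'))) (at t within {0..}))"

definition stationary :: "nat \<Rightarrow> nat \<Rightarrow> real \<Rightarrow> real \<Rightarrow> nat \<Rightarrow> ((nat \<Rightarrow> nat) \<Rightarrow> real) \<Rightarrow> bool" where
  "stationary C d \<sigma> \<beta> N \<nu> \<longleftrightarrow> is_distr (states C N) \<nu> \<and>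
     (\<forall>m\<in>states C N. (\<Sum>m'\<in>states C N. \<nu> m' * rate C d \<sigma> \<beta> N m' m)
                        = \<nu> m * (\<Sum>m'\<in>states C N. rate C d \<sigma> \<beta> N m m'))"

definition sq_dev :: "nat \<Rightarrow> (nat \<Rightarrow> real) \<Rightarrow> nat \<Rightarrow> (nat \<Rightarrow> nat) \<Rightarrow> real" where
  "sq_dev C \<pi> N m = real N * (\<Sum>n\<le>C. (real (m n) / real N - \<pi> n)\<^sup>2)"

definition expect :: "(nat \<Rightarrow> nat) set \<Rightarrow> ((nat \<Rightarrow> nat) \<Rightarrow> real) \<Rightarrow> ((nat \<Rightarrow> nat) \<Rightarrow> real) \<Rightarrow> real" where
  "expect S \<mu> f = (\<Sum>m\<in>S. \<mu> m * f m)"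

end

theory Submission
  imports Defs
begin

text \<open>With \<open>e = 1 / sqrt N\<close> consider the Lyapunov function
  \<open>V x = N * (\<Sum>n=1..C. sqrt ((x n - \<pi> n)\<^sup>2 + e\<^sup>2))\<^sup>2\<close>, a smoothed form of the squared
  \<open>\<ell>\<^sub>1\<close>-distance scaled by \<open>N\<close>, which is comparable to \<open>\<parallel>Q\<parallel>\<^sup>2\<close> up to a factor \<open>C\<close> and an
  additive \<open>C\<^sup>2\<close>. Tested against the smoothed signs \<open>(x n - \<pi> n) / sqrt ((x n - \<pi> n)\<^sup>2 + e\<^sup>2)\<close>,
  the mean-field drift is at most \<open>-(\<Sum>n. \<bar>x n - \<pi> n\<bar>) + O(e)\<close>: subtract the fixed-point
  equation and sum by parts. Since the chain jumps by \<open>1/N\<close>, the second-order terms of the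
  generator are \<open>O(1)\<close>, and the deviation of the arrival rate from \<open>\<sigma>\<close> is \<open>O(e)\<close>; together
  this gives the drift condition \<open>G V \<le> K - V\<close> with \<open>K\<close> independent of \<open>N\<close>. Along the
  Kolmogorov forward equation Gronwall's inequality turns it into \<open>E V(t) \<le> max (E V(0)) K\<close>,
  and under the balance equations of a stationary law into \<open>E V \<le> K\<close>.\<close>

section \<open>Finite-state Markov jump processes\<close>

lemma gronwall_exp_bound:
  fixes f f' :: "real \<Rightarrow> real" and L t :: real
  assumes deriv: "\<And>t. t \<ge> 0 \<Longrightarrow> (f has_real_derivative f' t) (at t within {0..})"
    and bound: "\<And>t. t \<ge> 0 \<Longrightarrow> f' t \<le> L * f t" and t: "t \<ge> 0"
  shows "f t \<le> f 0 * exp (L * t)"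
proof -
  define g where "g s = f s * exp (- L * s)" for s
  define g' where "g' s = (f' s - L * f s) * exp (- L * s)" for s
  have "(g has_real_derivative g' s) (at s within {0..t})" if "0 \<le> s" for s
  proof -
    have "(f has_real_derivative f' s) (at s within {0..t})"
      by (rule has_field_derivative_subset[OF deriv[OF that]]) auto
    then show ?thesis
      unfolding g_def g'_def by (auto intro!: derivative_eq_intros simp: algebra_simps)
  qed
  then obtain x where x: "x \<in> {0..t}" "g t - g 0 = g' x * (t - 0)"
    using mvt_very_simple[OF t, of g "\<lambda>s. (*) (g' s)"] unfolding has_field_derivative_def
    by force
  have "g' x \<le> 0"
    using bound[of x] x unfolding g'_def by (simp add: mult_nonpos_nonneg)
  with x t have "f t * exp (- L * t) \<le> f 0"
    using mult_nonpos_nonneg[of "g' x" t] unfolding g_def by simp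
  then have "f t * exp (- L * t) * exp (L * t) \<le> f 0 * exp (L * t)"
    by (simp add: mult_right_mono)
  then show ?thesis by (simp add: mult.assoc exp_add[symmetric])
qed

definition generator :: "'a set \<Rightarrow> ('a \<Rightarrow> 'a \<Rightarrow> real) \<Rightarrow> ('a \<Rightarrow> real) \<Rightarrow> 'a \<Rightarrow> real" where
  "generator S r f m = (\<Sum>m'\<in>S. r m m' * (f m' - f m))"

definition forward_equation :: "'a set \<Rightarrow> ('a \<Rightarrow> 'a \<Rightarrow> real) \<Rightarrow> (real \<Rightarrow> 'a \<Rightarrow> real) \<Rightarrow> bool" where
  "forward_equation S r p \<longleftrightarrow> (\<forall>t\<ge>0. \<forall>m\<in>S.
     ((\<lambda>s. p s m) has_real_derivative
        (\<Sum>m'\<in>S. p t m' * r m' m) - p t m * (\<Sum>m'\<in>S. r m m')) (at t within {0..}))"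

lemma forward_equationD:
  assumes "forward_equation S r p" and "t \<ge> 0" and "m \<in> S"
  shows "((\<lambda>s. p s m) has_real_derivative
           (\<Sum>m'\<in>S. p t m' * r m' m) - p t m * (\<Sum>m'\<in>S. r m m')) (at t within {0..})"
  using assms unfolding forward_equation_def by blast

lemma sum_forward_flux_eq_sum_generator:
  "(\<Sum>m\<in>S. ((\<Sum>m'\<in>S. q m' * r m' m) - q m * (\<Sum>m'\<in>S. r m m')) * f m)
       = (\<Sum>m\<in>S. q m * generator S r f m)"
proof -
  have inflow: "(\<Sum>m\<in>S. (\<Sum>m'\<in>S. q m' * r m' m) * f m) = (\<Sum>m\<in>S. \<Sum>m'\<in>S. q m * r m m' * f m')"
    unfolding sum_distrib_right by (rule sum.swap)
  have outflow: "(\<Sum>m\<in>S. q m * (\<Sum>m'\<in>S. r m m') * f m) = (\<Sum>m\<in>S. \<Sum>m'\<in>S. q m * r m m' * f m)"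
    by (simp add: sum_distrib_left sum_distrib_right)
  have "(\<Sum>m\<in>S. ((\<Sum>m'\<in>S. q m' * r m' m) - q m * (\<Sum>m'\<in>S. r m m')) * f m)
      = (\<Sum>m\<in>S. (\<Sum>m'\<in>S. q m' * r m' m) * f m) - (\<Sum>m\<in>S. q m * (\<Sum>m'\<in>S. r m m') * f m)"
    by (simp add: left_diff_distrib sum_subtractf)
  also have "\<dots> = (\<Sum>m\<in>S. \<Sum>m'\<in>S. q m * r m m' * f m' - q m * r m m' * f m)"
    unfolding inflow outflow by (simp add: sum_subtractf)
  also have "\<dots> = (\<Sum>m\<in>S. q m * generator S r f m)"
    unfolding generator_def by (simp add: sum_distrib_left right_diff_distrib mult.assoc)
  finally show ?thesis .
qed

lemma forward_equation_mean_deriv: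
  assumes "forward_equation S r p" and "t \<ge> 0"
  shows "((\<lambda>s. \<Sum>m\<in>S. p s m * f m) has_real_derivative (\<Sum>m\<in>S. p t m * generator S r f m))
           (at t within {0..})"
  unfolding sum_forward_flux_eq_sum_generator[symmetric]
  by (rule DERIV_sum, rule DERIV_cmult_right, rule forward_equationD[OF assms])

lemma has_real_derivative_min0_square:
  "((\<lambda>y::real. (min 0 y)\<^sup>2) has_real_derivative 2 * min 0 y) (at y)"
proof (cases y "0::real" rule: linorder_cases)
  case less
  have "((\<lambda>y::real. y\<^sup>2) has_real_derivative 2 * y) (at y)"
    by (auto intro!: derivative_eq_intros)
  then have "((\<lambda>y::real. (min 0 y)\<^sup>2) has_real_derivative 2 * y) (at y)"
    by (rule has_field_derivative_transform_within_open[where S="{..<0}"]) (use less in auto)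
  with less show ?thesis by simp
next
  case greater
  have "((\<lambda>y::real. 0) has_real_derivative 0) (at y)" by simp
  then have "((\<lambda>y::real. (min 0 y)\<^sup>2) has_real_derivative 0) (at y)"
    by (rule has_field_derivative_transform_within_open[where S="{0<..}"]) (use greater in auto)
  with greater show ?thesis by simp
next
  case equal
  have quotient: "((min 0 (0 + h))\<^sup>2 - (min 0 0)\<^sup>2) / h = min 0 h" for h :: real
    by (cases "h < 0") (auto simp: power2_eq_square min_def)
  have "((\<lambda>h::real. min 0 h) \<longlongrightarrow> min 0 0) (at 0)"
    by (intro tendsto_intros)
  then show ?thesis
    unfolding equal DERIV_def quotient by simp
qed

text \<open>Mass flows into a state only at nonnegative rates, so the squared negative part of a
  solution of the forward equation satisfies a linear differential inequality.\<close>
lemma negative_part_flux_le: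
  fixes r :: "'a \<Rightarrow> 'a \<Rightarrow> real" and q :: "'a \<Rightarrow> real"
  assumes fin: "finite S" and rates: "\<And>a b. a \<in> S \<Longrightarrow> b \<in> S \<Longrightarrow> r a b \<ge> 0"
  defines "R \<equiv> \<Sum>a\<in>S. \<Sum>b\<in>S. r a b"
  shows "(\<Sum>m\<in>S. 2 * min 0 (q m) * ((\<Sum>m'\<in>S. q m' * r m' m) - q m * (\<Sum>m'\<in>S. r m m')))
         \<le> 2 * R * real (card S) * (\<Sum>m\<in>S. (min 0 (q m))\<^sup>2)"
proof -
  define v where "v m = min 0 (q m)" for m
  define h where "h = (\<Sum>m\<in>S. (v m)\<^sup>2)"
  have r_le_R: "r a b \<le> R" if "a \<in> S" "b \<in> S" for a b
  proof -
    have "r a b \<le> (\<Sum>b\<in>S. r a b)" using that fin rates by (intro member_le_sum) auto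
    also have "\<dots> \<le> R" unfolding R_def using that fin rates by (intro member_le_sum sum_nonneg) auto
    finally show ?thesis .
  qed
  have term_le: "2 * v a * ((\<Sum>m'\<in>S. q m' * r m' a) - q a * (\<Sum>m'\<in>S. r a m'))
      \<le> R * (real (card S) * (v a)\<^sup>2 + h)" if a: "a \<in> S" for a
  proof -
    have v_nonpos: "v a \<le> 0" unfolding v_def by simp
    have "v a * q a = (v a)\<^sup>2" unfolding v_def by (simp add: min_def power2_eq_square)
    have "2 * v a * ((\<Sum>m'\<in>S. q m' * r m' a) - q a * (\<Sum>m'\<in>S. r a m'))
        = (\<Sum>m'\<in>S. 2 * (v a * q m' * r m' a)) - 2 * (v a * q a) * (\<Sum>m'\<in>S. r a m')"
      by (simp add: algebra_simps sum_distrib_left)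
    also have "\<dots> \<le> (\<Sum>m'\<in>S. 2 * (v a * q m' * r m' a))"
      using \<open>v a * q a = (v a)\<^sup>2\<close> rates a by (simp add: sum_nonneg)
    also have "\<dots> \<le> (\<Sum>m'\<in>S. 2 * (v a * v m' * r m' a))"
    proof (rule sum_mono)
      fix b assume b: "b \<in> S"
      have "v b * r b a \<le> q b * r b a"
        using rates[OF b a] by (intro mult_right_mono) (auto simp: v_def)
      from mult_left_mono_neg[OF this v_nonpos]
      show "2 * (v a * q b * r b a) \<le> 2 * (v a * v b * r b a)" by (simp add: mult.assoc)
    qed
    also have "\<dots> \<le> (\<Sum>m'\<in>S. ((v a)\<^sup>2 + (v m')\<^sup>2) * R)"
    proof (rule sum_mono)
      fix b assume b: "b \<in> S"
      have "v a * v b \<ge> 0" using v_nonpos by (simp add: v_def zero_le_mult_iff)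
      then have "2 * (v a * v b) * r b a \<le> ((v a)\<^sup>2 + (v b)\<^sup>2) * R"
        using sum_squares_bound[of "v a" "v b"] rates[OF b a] r_le_R[OF b a]
        by (intro mult_mono) (auto simp: mult.assoc)
      then show "2 * (v a * v b * r b a) \<le> ((v a)\<^sup>2 + (v b)\<^sup>2) * R" by (simp add: mult.assoc)
    qed
    also have "\<dots> = R * (real (card S) * (v a)\<^sup>2 + h)"
      unfolding h_def by (simp add: sum.distrib sum_distrib_left sum_distrib_right algebra_simps)
    finally show ?thesis .
  qed
  have "(\<Sum>m\<in>S. 2 * v m * ((\<Sum>m'\<in>S. q m' * r m' m) - q m * (\<Sum>m'\<in>S. r m m')))
      \<le> (\<Sum>m\<in>S. R * (real (card S) * (v m)\<^sup>2 + h))"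
    by (rule sum_mono) (rule term_le)
  also have "\<dots> = 2 * R * real (card S) * h"
    unfolding h_def by (simp add: sum.distrib sum_distrib_left algebra_simps)
  finally show ?thesis unfolding v_def h_def .
qed

lemma forward_equation_nonneg:
  assumes fin: "finite S" and rates: "\<And>a b. a \<in> S \<Longrightarrow> b \<in> S \<Longrightarrow> r a b \<ge> 0"
    and fwd: "forward_equation S r p" and init: "\<And>m. m \<in> S \<Longrightarrow> p 0 m \<ge> 0"
    and t: "t \<ge> 0" and m: "m \<in> S"
  shows "p t m \<ge> 0"
proof -
  define h where "h s = (\<Sum>m\<in>S. (min 0 (p s m))\<^sup>2)" for s
  define L where "L = 2 * (\<Sum>a\<in>S. \<Sum>b\<in>S. r a b) * real (card S)"
  define h' where "h' s = (\<Sum>m\<in>S. 2 * min 0 (p s m) *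
      ((\<Sum>m'\<in>S. p s m' * r m' m) - p s m * (\<Sum>m'\<in>S. r m m')))" for s
  have "(h has_real_derivative h' s) (at s within {0..})" if "s \<ge> 0" for s
    unfolding h_def h'_def
    by (rule DERIV_sum, rule DERIV_chain2[where f="\<lambda>y. (min 0 y)\<^sup>2", OF has_real_derivative_min0_square],
        rule forward_equationD[OF fwd that])
  moreover have "h' s \<le> L * h s" for s
    unfolding h_def h'_def L_def by (rule negative_part_flux_le[OF fin rates])
  ultimately have "h t \<le> h 0 * exp (L * t)"
    using t by (rule gronwall_exp_bound)
  also have "h 0 = 0" unfolding h_def using init by (intro sum.neutral) auto
  finally have "h t \<le> 0" by simp
  moreover have "(min 0 (p t m))\<^sup>2 \<le> h t"
    unfolding h_def using m fin by (intro member_le_sum) auto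
  ultimately have "(min 0 (p t m))\<^sup>2 \<le> 0" by linarith
  then show ?thesis by (simp add: min_def split: if_splits)
qed

lemma generator_const [simp]: "generator S r (\<lambda>_. c) m = 0"
  unfolding generator_def by simp

lemma forward_equation_mass_const:
  assumes fwd: "forward_equation S r p" and t: "t \<ge> 0"
  shows "sum (p t) S = sum (p 0) S"
proof -
  define f where "f s = sum (p s) S" for s
  have "(f has_real_derivative 0) (at s within {0..})" if "s \<ge> 0" for s
    using forward_equation_mean_deriv[OF fwd that, of "\<lambda>_. 1"] unfolding f_def by simp
  from gronwall_exp_bound[of f "\<lambda>_. 0" 0, OF this _ t]
    gronwall_exp_bound[of "\<lambda>s. - f s" "\<lambda>_. 0" 0, OF DERIV_minus[OF this, simplified] _ t]
  show ?thesis unfolding f_def by simp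
qed

lemma forward_equation_lyapunov_bound:
  assumes fin: "finite S" and rates: "\<And>a b. a \<in> S \<Longrightarrow> b \<in> S \<Longrightarrow> r a b \<ge> 0"
    and fwd: "forward_equation S r p"
    and init: "\<And>m. m \<in> S \<Longrightarrow> p 0 m \<ge> 0" "sum (p 0) S = 1"
    and drift: "\<And>m. m \<in> S \<Longrightarrow> generator S r V m \<le> K - V m"
    and t: "t \<ge> 0"
  shows "(\<Sum>m\<in>S. p t m * V m) \<le> max (\<Sum>m\<in>S. p 0 m * V m) K"
proof -
  define f where "f s = (\<Sum>m\<in>S. p s m * V m) - K" for s
  have "(f has_real_derivative (\<Sum>m\<in>S. p s m * generator S r V m)) (at s within {0..})"
    if "s \<ge> 0" for s
    unfolding f_def using forward_equation_mean_deriv[OF fwd that]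
    by (rule DERIV_diff[OF _ DERIV_const, simplified])
  moreover have "(\<Sum>m\<in>S. p s m * generator S r V m) \<le> (-1) * f s" if s: "s \<ge> 0" for s
  proof -
    have "(\<Sum>m\<in>S. p s m * generator S r V m) \<le> (\<Sum>m\<in>S. p s m * (K - V m))"
      using drift forward_equation_nonneg[OF fin rates fwd init(1) s]
      by (intro sum_mono mult_left_mono) auto
    also have "\<dots> = K * sum (p s) S - (\<Sum>m\<in>S. p s m * V m)"
      by (simp add: algebra_simps sum_subtractf sum_distrib_left)
    also have "sum (p s) S = 1"
      using forward_equation_mass_const[OF fwd s] init(2) by simp
    finally show ?thesis unfolding f_def by simp
  qed
  ultimately have "f t \<le> f 0 * exp ((-1) * t)"
    using t by (rule gronwall_exp_bound)
  also have "\<dots> \<le> max (f 0) 0"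
    using t by (cases "f 0 \<ge> 0") (auto simp: mult_left_le mult_nonpos_nonneg)
  finally show ?thesis unfolding f_def by linarith
qed

lemma stationary_lyapunov_bound:
  assumes distr: "\<And>m. m \<in> S \<Longrightarrow> \<nu> m \<ge> 0" "sum \<nu> S = 1"
    and balance: "\<And>m. m \<in> S \<Longrightarrow> (\<Sum>m'\<in>S. \<nu> m' * r m' m) = \<nu> m * (\<Sum>m'\<in>S. r m m')"
    and drift: "\<And>m. m \<in> S \<Longrightarrow> generator S r V m \<le> K - V m"
  shows "(\<Sum>m\<in>S. \<nu> m * V m) \<le> K"
proof -
  have "0 = (\<Sum>m\<in>S. \<nu> m * generator S r V m)"
    unfolding sum_forward_flux_eq_sum_generator[symmetric] using balance by simp
  also have "\<dots> \<le> (\<Sum>m\<in>S. \<nu> m * (K - V m))"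
    using drift distr by (intro sum_mono mult_left_mono) auto
  also have "\<dots> = K - (\<Sum>m\<in>S. \<nu> m * V m)"
    using distr by (simp add: algebra_simps sum_subtractf flip: sum_distrib_left)
  finally show ?thesis by simp
qed

section \<open>A smoothed absolute value\<close>

definition smooth_abs :: "real \<Rightarrow> real \<Rightarrow> real" where
  "smooth_abs e u = sqrt (u\<^sup>2 + e\<^sup>2)"

lemma abs_le_smooth_abs: "\<bar>u\<bar> \<le> smooth_abs e u"
  unfolding smooth_abs_def by (rule real_sqrt_ge_abs1)

lemma smooth_abs_le: "smooth_abs e u \<le> \<bar>u\<bar> + \<bar>e\<bar>"
  unfolding smooth_abs_def by (rule sqrt_sum_squares_le_sum_abs)

lemma smooth_abs_ge_param: "\<bar>e\<bar> \<le> smooth_abs e u"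
  unfolding smooth_abs_def by (rule real_sqrt_ge_abs2)

lemma smooth_abs_nonneg: "0 \<le> smooth_abs e u"
  unfolding smooth_abs_def by simp

lemma smooth_abs_lipschitz: "smooth_abs e v \<le> smooth_abs e u + \<bar>v - u\<bar>"
  using real_sqrt_sum_squares_triangle_ineq[of u "v - u" e 0]
  unfolding smooth_abs_def by simp

lemma abs_smooth_sign_le_1: "\<bar>u / smooth_abs e u\<bar> \<le> 1"
  using abs_le_smooth_abs[of u e] smooth_abs_nonneg[of e u] by (auto simp: abs_div divide_le_eq_1)

lemma mult_smooth_sign_ge: "e \<ge> 0 \<Longrightarrow> u * (u / smooth_abs e u) \<ge> \<bar>u\<bar> - e"
proof (cases "\<bar>u\<bar> \<le> e")
  case True
  have "0 \<le> u * u / smooth_abs e u" by (simp add: smooth_abs_nonneg)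
  with True show ?thesis by simp
next
  case False
  assume e: "e \<ge> 0"
  have "smooth_abs e u * (\<bar>u\<bar> - e) \<le> (\<bar>u\<bar> + e) * (\<bar>u\<bar> - e)"
    using False e smooth_abs_le[of e u] by (intro mult_right_mono) auto
  also have "\<dots> \<le> u * u" by (simp add: algebra_simps abs_mult_self_eq)
  moreover have "0 < smooth_abs e u"
    using False e abs_le_smooth_abs[of u e] by linarith
  ultimately show ?thesis by (simp add: pos_le_divide_eq mult.commute)
qed

lemma smooth_sign_lipschitz_term_le:
  assumes e: "e \<ge> 0" and p: "\<bar>p\<bar> \<le> 1" and k: "0 \<le> k" "k \<le> K"
  shows "p * (k * u) - (u / smooth_abs e u) * (k * u) \<le> K * e"
proof (cases "u = 0")
  case True
  with e k show ?thesis by simp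
next
  case False
  define r where "r = smooth_abs e u"
  have r: "\<bar>u\<bar> \<le> r" "r \<le> \<bar>u\<bar> + e" "r > 0"
    using abs_le_smooth_abs[of u e] smooth_abs_le[of e u] e False unfolding r_def by auto
  have "p * (k * u) \<le> \<bar>p\<bar> * (k * \<bar>u\<bar>)"
    using k by (metis abs_ge_self abs_mult abs_of_nonneg)
  also have "\<dots> \<le> k * \<bar>u\<bar>"
    using p k by (intro mult_left_le_one_le) auto
  finally have "p * (k * u) \<le> k * \<bar>u\<bar>" .
  moreover have "(u / r) * (k * u) = k * \<bar>u\<bar> * (\<bar>u\<bar> / r)"
    by (simp add: abs_mult_self_eq)
  moreover have "k * \<bar>u\<bar> - k * \<bar>u\<bar> * (\<bar>u\<bar> / r) = k * (\<bar>u\<bar> / r) * (r - \<bar>u\<bar>)"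
    using r by (simp add: field_simps)
  moreover have "k * (\<bar>u\<bar> / r) \<le> K"
    using mult_left_le[of "\<bar>u\<bar> / r" k] r k by simp
  then have "k * (\<bar>u\<bar> / r) * (r - \<bar>u\<bar>) \<le> K * e"
    using r k by (intro mult_mono) auto
  ultimately show ?thesis unfolding r_def by linarith
qed

lemma smooth_abs_increment_le:
  assumes e: "e > 0"
  shows "smooth_abs e (u + \<delta>) - smooth_abs e u \<le> \<delta> * (u / smooth_abs e u) + \<delta>\<^sup>2 / (2 * e)"
proof -
  define a where "a = smooth_abs e u"
  define b where "b = smooth_abs e (u + \<delta>)"
  have a2: "a\<^sup>2 = u\<^sup>2 + e\<^sup>2" and b2: "b\<^sup>2 = (u + \<delta>)\<^sup>2 + e\<^sup>2"
    unfolding a_def b_def smooth_abs_def by simp_all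
  have ae: "e \<le> a" using smooth_abs_ge_param[of e u] e unfolding a_def by simp
  have "a * b \<le> (a\<^sup>2 + b\<^sup>2) / 2" using sum_squares_bound[of a b] by simp
  then have "a * (b - a) \<le> u * \<delta> + \<delta>\<^sup>2 / 2"
    using a2 b2 by (simp add: power2_eq_square algebra_simps)
  then have "b - a \<le> \<delta> * (u / a) + \<delta>\<^sup>2 / (2 * a)"
    using ae e by (simp add: field_simps)
  also have "\<delta>\<^sup>2 / (2 * a) \<le> \<delta>\<^sup>2 / (2 * e)"
    using ae e by (intro divide_left_mono) auto
  finally show ?thesis unfolding a_def b_def by simp
qed

section \<open>Drift of the mean-field equation\<close>

lemma power_diff_eq_mult_bounded_factor:
  fixes x y :: real
  assumes "0 \<le> x" "x \<le> 1" "0 \<le> y" "y \<le> 1"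
  shows "\<exists>k. 0 \<le> k \<and> k \<le> real d \<and> x ^ d - y ^ d = k * (x - y)"
proof (cases d)
  case 0
  then show ?thesis by (intro exI[of _ 0]) simp
next
  case (Suc e)
  define k where "k = (\<Sum>p<Suc e. x ^ p * y ^ (e - p))"
  have "x ^ d - y ^ d = (x - y) * k" unfolding Suc k_def by (rule diff_power_eq_sum)
  moreover have "0 \<le> k" unfolding k_def using assms by (intro sum_nonneg) auto
  moreover have "k \<le> (\<Sum>p<Suc e. 1)" unfolding k_def
    using assms by (intro sum_mono) (auto intro!: mult_le_one power_le_one)
  ultimately show ?thesis using Suc by (intro exI[of _ k]) (auto simp: mult.commute)
qed

lemma smooth_sign_level_term_le:
  fixes u \<Delta> p q e \<sigma> k :: real
  assumes e: "e \<ge> 0" and \<sigma>: "\<sigma> \<ge> 0" and p: "\<bar>p\<bar> \<le> 1" and q: "\<bar>q\<bar> \<le> 1"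
    and k: "0 \<le> k" "k \<le> real d" "\<Delta> = k * u" and n: "1 \<le> n" "n \<le> C"
  defines "\<phi> \<equiv> u / smooth_abs e u"
  shows "\<sigma> * p * \<Delta> - \<sigma> * \<phi> * \<Delta> - real n * \<phi> * u + real (n - 1) * q * u
           \<le> - \<bar>u\<bar> + e * (\<sigma> * real d + real C)"
proof -
  have "\<sigma> * (p * (k * u) - \<phi> * (k * u)) \<le> \<sigma> * (real d * e)"
    using smooth_sign_lipschitz_term_le[OF e p k(1,2)] \<sigma> unfolding \<phi>_def by (rule mult_left_mono)
  moreover have "real n * \<bar>u\<bar> - real n * e \<le> real n * (\<phi> * u)"
    using mult_left_mono[OF mult_smooth_sign_ge[OF e, of u], of "real n"] unfolding \<phi>_def
    by (simp add: right_diff_distrib mult.commute)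
  moreover have "q * u \<le> \<bar>u\<bar>"
    using q by (metis abs_ge_self abs_mult mult_left_le_one_le abs_ge_zero order_trans)
  then have "real (n - 1) * (q * u) \<le> real n * \<bar>u\<bar> - \<bar>u\<bar>"
    using mult_left_mono[of "q * u" "\<bar>u\<bar>" "real (n - 1)"] n
    by (simp add: of_nat_diff left_diff_distrib)
  moreover have "real n * e \<le> real C * e"
    using n e by (auto intro: mult_right_mono)
  moreover have "e * (\<sigma> * real d + real C) = \<sigma> * (real d * e) + real C * e"
    by (simp add: algebra_simps)
  moreover have "\<sigma> * p * \<Delta> - \<sigma> * \<phi> * \<Delta> - real n * \<phi> * u + real (n - 1) * q * u
      = \<sigma> * (p * (k * u) - \<phi> * (k * u)) - real n * (\<phi> * u) + real (n - 1) * (q * u)"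
    unfolding k(3) by (simp add: algebra_simps)
  ultimately show ?thesis by linarith
qed

locale mean_field_fixed_point =
  fixes C d :: nat and \<sigma> :: real and \<pi> :: "nat \<Rightarrow> real"
  assumes \<sigma>_pos: "\<sigma> > 0"
    and \<pi>0: "\<pi> 0 = 1" and \<pi>_mono: "\<forall>n<C. \<pi> (Suc n) \<le> \<pi> n" and \<pi>_nonneg: "\<pi> C \<ge> 0"
    and \<pi>_top: "\<pi> (Suc C) = 0"
    and \<pi>_fixed: "\<forall>n\<in>{1..C}. \<sigma> * (\<pi> (n - 1) ^ d - \<pi> n ^ d) = real n * (\<pi> n - \<pi> (Suc n))"
begin

lemma \<pi>_range:
  assumes "n \<le> C"
  shows "0 \<le> \<pi> n \<and> \<pi> n \<le> 1"
proof -
  have "\<pi> j \<le> \<pi> i" if "i \<le> j" "j \<le> C" for i j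
    by (rule lift_Suc_antimono_le_ivl[where N="{..<C}"]) (use \<pi>_mono that in auto)
  from this[of 0 n] this[of n C] have "\<pi> n \<le> \<pi> 0" "\<pi> C \<le> \<pi> n" using assms by auto
  with \<pi>0 \<pi>_nonneg show ?thesis by simp
qed

text \<open>Subtracting the fixed-point equation and summing by parts (the sums of \<open>T\<close> and \<open>W\<close>
  telescope to zero) leaves, for each \<open>n\<close>, a term of at most \<open>-\<bar>x n - \<pi> n\<bar> + O(e)\<close>.\<close>
lemma fixed_point_drift_smooth_sign_le:
  fixes x :: "nat \<Rightarrow> real" and e :: real
  assumes e: "e \<ge> 0" and x0: "x 0 = 1" and x_top: "x (Suc C) = 0"
    and x_range: "\<And>n. n \<le> C \<Longrightarrow> 0 \<le> x n \<and> x n \<le> 1"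
  shows "(\<Sum>n\<in>{1..C}. (x n - \<pi> n) / smooth_abs e (x n - \<pi> n) *
            (\<sigma> * (x (n - 1) ^ d - x n ^ d) - real n * (x n - x (Suc n))))
         \<le> - (\<Sum>n\<in>{1..C}. \<bar>x n - \<pi> n\<bar>) + e * real C * (\<sigma> * real d + real C)"
proof -
  define u where "u n = x n - \<pi> n" for n
  define \<phi> where "\<phi> n = u n / smooth_abs e (u n)" for n
  define \<Delta> where "\<Delta> n = x n ^ d - \<pi> n ^ d" for n
  define T where "T n = \<phi> (Suc n) * \<Delta> n" for n
  define W where "W n = real n * \<phi> n * u (Suc n)" for n
  define B where "B n = \<sigma> * \<phi> (Suc n) * \<Delta> n - \<sigma> * \<phi> n * \<Delta> n - real n * \<phi> n * u n
                         + real (n - 1) * \<phi> (n - 1) * u n" for n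
  have \<phi>_top: "\<phi> (Suc C) = 0" and \<Delta>0: "\<Delta> 0 = 0"
    unfolding \<phi>_def \<Delta>_def u_def using x_top \<pi>_top x0 \<pi>0 by simp_all
  have T_telescope: "(\<Sum>n\<in>{1..C}. T n - T (n - 1)) = 0"
    using sum_telescope''[of 0 C T] \<phi>_top \<Delta>0 by (simp add: T_def)
  have W_telescope: "(\<Sum>n\<in>{1..C}. W n - W (n - 1)) = 0"
    using sum_telescope''[of 0 C W] x_top \<pi>_top by (simp add: W_def u_def)
  have split: "\<phi> n * (\<sigma> * (x (n - 1) ^ d - x n ^ d) - real n * (x n - x (Suc n)))
      = B n - \<sigma> * (T n - T (n - 1)) + (W n - W (n - 1))" if n: "n \<in> {1..C}" for n
  proof -
    have eq: "\<sigma> * (x (n - 1) ^ d - x n ^ d) - real n * (x n - x (Suc n))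
        = \<sigma> * (\<Delta> (n - 1) - \<Delta> n) - real n * (u n - u (Suc n))"
      using \<pi>_fixed n unfolding \<Delta>_def u_def by (simp add: algebra_simps)
    have "Suc (n - 1) = n" using n by simp
    then have "T (n - 1) = \<phi> n * \<Delta> (n - 1)" "W (n - 1) = real (n - 1) * \<phi> (n - 1) * u n"
      unfolding T_def W_def by simp_all
    then show ?thesis unfolding eq B_def by (simp add: T_def[of n] W_def[of n] algebra_simps)
  qed
  have B_le: "B n \<le> - \<bar>u n\<bar> + e * (\<sigma> * real d + real C)" if n: "n \<in> {1..C}" for n
  proof -
    obtain k where k: "0 \<le> k" "k \<le> real d" "\<Delta> n = k * u n"
      using power_diff_eq_mult_bounded_factor[of "x n" "\<pi> n" d] x_range \<pi>_range n
      unfolding \<Delta>_def u_def by auto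
    then show ?thesis
      unfolding B_def \<phi>_def
      by (rule smooth_sign_level_term_le[OF e less_imp_le[OF \<sigma>_pos] abs_smooth_sign_le_1
            abs_smooth_sign_le_1]) (use n in auto)
  qed
  have "(\<Sum>n\<in>{1..C}. \<phi> n * (\<sigma> * (x (n - 1) ^ d - x n ^ d) - real n * (x n - x (Suc n))))
      = (\<Sum>n\<in>{1..C}. B n - \<sigma> * (T n - T (n - 1)) + (W n - W (n - 1)))"
    by (rule sum.cong[OF refl split])
  also have "\<dots> = (\<Sum>n\<in>{1..C}. B n) - \<sigma> * (\<Sum>n\<in>{1..C}. T n - T (n - 1))
                    + (\<Sum>n\<in>{1..C}. W n - W (n - 1))"
    by (simp add: sum.distrib sum_subtractf sum_distrib_left right_diff_distrib)
  also have "\<dots> = (\<Sum>n\<in>{1..C}. B n)"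
    unfolding T_telescope W_telescope by simp
  also have "\<dots> \<le> (\<Sum>n\<in>{1..C}. - \<bar>u n\<bar> + e * (\<sigma> * real d + real C))"
    by (rule sum_mono) (rule B_le)
  also have "\<dots> = - (\<Sum>n\<in>{1..C}. \<bar>u n\<bar>) + e * real C * (\<sigma> * real d + real C)"
    by (simp only: sum.distrib sum_negf sum_constant card_atLeastAtMost) (simp add: algebra_simps)
  finally show ?thesis unfolding \<phi>_def u_def .
qed

end

section \<open>The Lyapunov function\<close>

definition smoothed_l1 :: "nat \<Rightarrow> real \<Rightarrow> (nat \<Rightarrow> real) \<Rightarrow> (nat \<Rightarrow> real) \<Rightarrow> real" where
  "smoothed_l1 C e \<pi> x = (\<Sum>n\<in>{1..C}. smooth_abs e (x n - \<pi> n))"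

definition lyapunov :: "nat \<Rightarrow> nat \<Rightarrow> (nat \<Rightarrow> real) \<Rightarrow> (nat \<Rightarrow> real) \<Rightarrow> real" where
  "lyapunov C N \<pi> x = real N * (smoothed_l1 C (1 / sqrt (real N)) \<pi> x)\<^sup>2"

lemma smoothed_l1_nonneg: "0 \<le> smoothed_l1 C e \<pi> x"
  unfolding smoothed_l1_def by (intro sum_nonneg smooth_abs_nonneg)

lemma smoothed_l1_fun_upd:
  assumes "n \<in> {1..C}"
  shows "smoothed_l1 C e \<pi> (x(n := v))
    = smoothed_l1 C e \<pi> x - smooth_abs e (x n - \<pi> n) + smooth_abs e (v - \<pi> n)"
proof -
  have "smoothed_l1 C e \<pi> (x(n := v))
      = smooth_abs e (v - \<pi> n) + (\<Sum>j\<in>{1..C} - {n}. smooth_abs e ((x(n := v)) j - \<pi> j))"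
    unfolding smoothed_l1_def using assms by (simp add: sum.remove)
  also have "(\<Sum>j\<in>{1..C} - {n}. smooth_abs e ((x(n := v)) j - \<pi> j))
      = (\<Sum>j\<in>{1..C} - {n}. smooth_abs e (x j - \<pi> j))"
    by (rule sum.cong) auto
  moreover have "smoothed_l1 C e \<pi> x
      = smooth_abs e (x n - \<pi> n) + (\<Sum>j\<in>{1..C} - {n}. smooth_abs e (x j - \<pi> j))"
    unfolding smoothed_l1_def using assms by (simp add: sum.remove)
  ultimately show ?thesis by simp
qed

lemma lyapunov_update_le:
  fixes x \<pi> :: "nat \<Rightarrow> real"
  assumes N: "N \<ge> 1" and n: "n \<in> {1..C}" and \<delta>: "\<bar>\<delta>\<bar> = 1"
  defines "e \<equiv> 1 / sqrt (real N)"
  defines "s \<equiv> smoothed_l1 C e \<pi> x"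
  shows "lyapunov C N \<pi> (x(n := x n + \<delta> / real N)) - lyapunov C N \<pi> x
     \<le> 2 * \<delta> * s * ((x n - \<pi> n) / smooth_abs e (x n - \<pi> n)) + e * s + e\<^sup>2"
proof -
  define u where "u = x n - \<pi> n"
  define h where "h = smooth_abs e (u + \<delta> / real N) - smooth_abs e u"
  have N0: "real N > 0" using N by simp
  have e0: "e > 0" and Ne2: "real N * e\<^sup>2 = 1"
    unfolding e_def using N0 by (simp_all add: power_divide)
  have s0: "s \<ge> 0" unfolding s_def by (rule smoothed_l1_nonneg)
  have upd: "smoothed_l1 C e \<pi> (x(n := x n + \<delta> / real N)) = s + h"
    unfolding s_def h_def u_def smoothed_l1_fun_upd[OF n] by (simp add: algebra_simps)
  have h_le: "h \<le> \<delta> / real N * (u / smooth_abs e u) + (\<delta> / real N)\<^sup>2 / (2 * e)"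
    unfolding h_def by (rule smooth_abs_increment_le[OF e0])
  have "\<bar>h\<bar> \<le> \<bar>\<delta> / real N\<bar>"
    using smooth_abs_lipschitz[of e "u + \<delta> / real N" u] smooth_abs_lipschitz[of e u "u + \<delta> / real N"]
    unfolding h_def by simp
  then have h2: "h\<^sup>2 \<le> (\<delta> / real N)\<^sup>2"
    by (metis abs_ge_zero power2_abs power_mono)
  have "lyapunov C N \<pi> (x(n := x n + \<delta> / real N)) - lyapunov C N \<pi> x
      = real N * (2 * s * h + h\<^sup>2)"
    unfolding lyapunov_def upd e_def[symmetric] s_def[symmetric] by (simp add: algebra_simps power2_eq_square)
  also have "\<dots> \<le> real N * (2 * s * (\<delta> / real N * (u / smooth_abs e u) + (\<delta> / real N)\<^sup>2 / (2 * e))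
                              + (\<delta> / real N)\<^sup>2)"
    using h_le h2 s0 N0 by (intro mult_left_mono add_mono) auto
  also have "\<dots> = 2 * \<delta> * s * (u / smooth_abs e u) + s * \<delta>\<^sup>2 * (1 / (real N * e))
                  + \<delta>\<^sup>2 * (1 / real N)"
    using N0 e0 by (simp add: field_simps power2_eq_square)
  also have "1 / (real N * e) = e"
    using Ne2 N0 e0 by (simp add: field_simps power2_eq_square)
  also have "1 / real N = e\<^sup>2"
    using Ne2 N0 by (simp add: field_simps)
  also have "\<delta>\<^sup>2 = 1"
    using \<delta> by (metis power2_abs one_power2)
  finally show ?thesis unfolding u_def by (simp add: mult.commute fun_upd_def)
qed

lemma lyapunov_weighted_updates_le:
  fixes x \<pi> a b :: "nat \<Rightarrow> real"
  assumes N: "N \<ge> 1"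
    and a: "\<And>n. n \<in> {1..C} \<Longrightarrow> a n \<ge> 0" and b: "\<And>n. n \<in> {1..C} \<Longrightarrow> b n \<ge> 0"
  defines "e \<equiv> 1 / sqrt (real N)"
  defines "s \<equiv> smoothed_l1 C e \<pi> x"
  shows "(\<Sum>n\<in>{1..C}. a n * (lyapunov C N \<pi> (x(n := x n + 1 / real N)) - lyapunov C N \<pi> x))
       + (\<Sum>n\<in>{1..C}. b n * (lyapunov C N \<pi> (x(n := x n - 1 / real N)) - lyapunov C N \<pi> x))
       \<le> 2 * s * (\<Sum>n\<in>{1..C}. (x n - \<pi> n) / smooth_abs e (x n - \<pi> n) * (a n - b n))
         + (e * s + e\<^sup>2) * (\<Sum>n\<in>{1..C}. a n + b n)"
proof -
  define \<phi> where "\<phi> n = (x n - \<pi> n) / smooth_abs e (x n - \<pi> n)" for n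
  define E where "E = e * s + e\<^sup>2"
  have up: "a n * (lyapunov C N \<pi> (x(n := x n + 1 / real N)) - lyapunov C N \<pi> x)
      \<le> a n * (2 * s * \<phi> n + E)" if n: "n \<in> {1..C}" for n
    using lyapunov_update_le[OF N n, of 1 \<pi> x, folded e_def] a[OF n]
    by (intro mult_left_mono) (simp_all add: \<phi>_def E_def s_def)
  have down: "b n * (lyapunov C N \<pi> (x(n := x n - 1 / real N)) - lyapunov C N \<pi> x)
      \<le> b n * (- 2 * s * \<phi> n + E)" if n: "n \<in> {1..C}" for n
    using lyapunov_update_le[OF N n, of "-1" \<pi> x, folded e_def] b[OF n]
    by (intro mult_left_mono) (simp_all add: \<phi>_def E_def s_def)
  have "(\<Sum>n\<in>{1..C}. a n * (lyapunov C N \<pi> (x(n := x n + 1 / real N)) - lyapunov C N \<pi> x))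
       + (\<Sum>n\<in>{1..C}. b n * (lyapunov C N \<pi> (x(n := x n - 1 / real N)) - lyapunov C N \<pi> x))
      \<le> (\<Sum>n\<in>{1..C}. a n * (2 * s * \<phi> n + E)) + (\<Sum>n\<in>{1..C}. b n * (- 2 * s * \<phi> n + E))"
    using up down by (intro add_mono sum_mono)
  also have "\<dots> = 2 * s * (\<Sum>n\<in>{1..C}. \<phi> n * (a n - b n)) + E * (\<Sum>n\<in>{1..C}. a n + b n)"
    by (simp add: sum.distrib sum_subtractf sum_distrib_left algebra_simps)
  finally show ?thesis unfolding \<phi>_def E_def .
qed

definition occupancy_profile :: "nat \<Rightarrow> (nat \<Rightarrow> real) \<Rightarrow> bool" where
  "occupancy_profile C x \<longleftrightarrow> x 0 = 1 \<and> x (Suc C) = 0 \<and> (\<forall>n\<le>C. 0 \<le> x n \<and> x n \<le> 1)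
     \<and> (\<forall>n<C. x (Suc n) \<le> x n)"

lemma occupancy_profile_diffs:
  assumes x: "occupancy_profile C x" and n: "n \<in> {1..C}"
  shows "0 \<le> x (n - 1) ^ d - x n ^ d" "x (n - 1) ^ d - x n ^ d \<le> 1"
    and "0 \<le> x n - x (Suc n)" "x n - x (Suc n) \<le> 1"
proof -
  have x_n: "0 \<le> x n" "x n \<le> 1" "0 \<le> x (n - 1)" "x (n - 1) \<le> 1" "x n \<le> x (n - 1)"
    using x n unfolding occupancy_profile_def by (auto elim!: allE[of _ "n - 1"])
  then show "0 \<le> x (n - 1) ^ d - x n ^ d" "x (n - 1) ^ d - x n ^ d \<le> 1"
    using power_mono[of "x n" "x (n - 1)" d] power_le_one[of "x (n - 1)" d] zero_le_power[of "x n" d]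
    by linarith+
  have "0 \<le> x (Suc n) \<and> x (Suc n) \<le> x n"
    using x n unfolding occupancy_profile_def by (cases "n = C") auto
  with x_n show "0 \<le> x n - x (Suc n)" "x n - x (Suc n) \<le> 1" by auto
qed

definition drift_constant :: "nat \<Rightarrow> nat \<Rightarrow> real \<Rightarrow> real \<Rightarrow> real" where
  "drift_constant C d \<sigma> \<beta> =
     (real C * (\<sigma> + \<bar>\<beta>\<bar> + real C) + 2 * (real C * (1 + \<sigma> * real d + real C + \<bar>\<beta>\<bar>)))\<^sup>2 / 4
     + real C * (\<sigma> + \<bar>\<beta>\<bar> + real C)"

lemma drift_absorb_le:
  fixes s M L :: real
  assumes N: "real N > 0" and s: "s \<ge> 0"
  shows "2 * s * (real N * (- s + 1 / sqrt (real N) * M))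
           + (1 / sqrt (real N) * s + (1 / sqrt (real N))\<^sup>2) * (real N * L)
         \<le> (L + 2 * M)\<^sup>2 / 4 + L - real N * s\<^sup>2"
proof -
  define y where "y = s * sqrt (real N)"
  have y2: "y\<^sup>2 = real N * s\<^sup>2" unfolding y_def using N by (simp add: power_mult_distrib)
  have "2 * s * (real N * (- s + 1 / sqrt (real N) * M))
           + (1 / sqrt (real N) * s + (1 / sqrt (real N))\<^sup>2) * (real N * L)
      = - 2 * y\<^sup>2 + y * (L + 2 * M) + L"
    unfolding y2 unfolding y_def using N
    by (simp add: field_simps power2_eq_square real_sqrt_mult[symmetric])
  also have "\<dots> \<le> - y\<^sup>2 + (L + 2 * M)\<^sup>2 / 4 + L"
    using zero_le_power2[of "y - (L + 2 * M) / 2"] by (simp add: power2_eq_square algebra_simps)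
  finally show ?thesis unfolding y2 by simp
qed

context mean_field_fixed_point
begin

lemma perturbed_drift_smooth_sign_le:
  fixes x :: "nat \<Rightarrow> real"
  assumes e: "e \<ge> 0" and \<alpha>: "\<bar>\<alpha> - \<sigma>\<bar> \<le> \<bar>\<beta>\<bar> * e" and x: "occupancy_profile C x"
  shows "(\<Sum>n\<in>{1..C}. (x n - \<pi> n) / smooth_abs e (x n - \<pi> n) *
            (\<alpha> * (x (n - 1) ^ d - x n ^ d) - real n * (x n - x (Suc n))))
      \<le> - smoothed_l1 C e \<pi> x + e * real C * (1 + \<sigma> * real d + real C + \<bar>\<beta>\<bar>)"
proof -
  define \<phi> where "\<phi> n = (x n - \<pi> n) / smooth_abs e (x n - \<pi> n)" for n
  define h where "h n = x (n - 1) ^ d - x n ^ d" for n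
  define P where "P = (\<Sum>n\<in>{1..C}. \<phi> n * (\<sigma> * h n - real n * (x n - x (Suc n))))"
  define Q where "Q = (\<Sum>n\<in>{1..C}. \<phi> n * h n)"
  have P: "P \<le> - (\<Sum>n\<in>{1..C}. \<bar>x n - \<pi> n\<bar>) + e * real C * (\<sigma> * real d + real C)"
    using fixed_point_drift_smooth_sign_le[OF e, of x] x
    unfolding P_def \<phi>_def h_def occupancy_profile_def by simp
  have "smoothed_l1 C e \<pi> x \<le> (\<Sum>n\<in>{1..C}. \<bar>x n - \<pi> n\<bar> + e)"
    unfolding smoothed_l1_def using smooth_abs_le[of e] e by (intro sum_mono) simp
  then have l1: "smoothed_l1 C e \<pi> x - real C * e \<le> (\<Sum>n\<in>{1..C}. \<bar>x n - \<pi> n\<bar>)"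
    by (simp add: sum.distrib)
  have "\<bar>Q\<bar> \<le> (\<Sum>n\<in>{1..C}. \<bar>\<phi> n\<bar> * \<bar>h n\<bar>)"
    unfolding Q_def abs_mult[symmetric] by (rule sum_abs)
  also have "\<dots> \<le> (\<Sum>n\<in>{1..C}. 1)"
    using occupancy_profile_diffs[OF x] abs_smooth_sign_le_1
    by (intro sum_mono mult_le_one) (auto simp: \<phi>_def h_def)
  finally have "\<bar>Q\<bar> \<le> real C" by simp
  have "(\<alpha> - \<sigma>) * Q \<le> \<bar>\<alpha> - \<sigma>\<bar> * \<bar>Q\<bar>" by (metis abs_ge_self abs_mult)
  also have "\<dots> \<le> (\<bar>\<beta>\<bar> * e) * real C"
    using \<alpha> \<open>\<bar>Q\<bar> \<le> real C\<close> by (intro mult_mono) auto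
  finally have "(\<alpha> - \<sigma>) * Q \<le> \<bar>\<beta>\<bar> * e * real C" .
  moreover have "(\<Sum>n\<in>{1..C}. \<phi> n * (\<alpha> * h n - real n * (x n - x (Suc n))))
      = (\<Sum>n\<in>{1..C}. \<phi> n * (\<sigma> * h n - real n * (x n - x (Suc n))) + (\<alpha> - \<sigma>) * (\<phi> n * h n))"
    by (rule sum.cong) (simp_all add: algebra_simps)
  then have "(\<Sum>n\<in>{1..C}. \<phi> n * (\<alpha> * h n - real n * (x n - x (Suc n)))) = P + (\<alpha> - \<sigma>) * Q"
    unfolding P_def Q_def by (simp only: sum.distrib sum_distrib_left)
  moreover have "e * real C * (1 + \<sigma> * real d + real C + \<bar>\<beta>\<bar>)
      = e * real C * (\<sigma> * real d + real C) + real C * e + \<bar>\<beta>\<bar> * e * real C"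
    by (simp add: algebra_simps)
  ultimately have "(\<Sum>n\<in>{1..C}. \<phi> n * (\<alpha> * h n - real n * (x n - x (Suc n))))
      \<le> - smoothed_l1 C e \<pi> x + e * real C * (1 + \<sigma> * real d + real C + \<bar>\<beta>\<bar>)"
    using P l1 by linarith
  then show ?thesis unfolding \<phi>_def h_def .
qed

lemma lyapunov_profile_drift_le:
  fixes x :: "nat \<Rightarrow> real"
  assumes N: "N \<ge> 1" and \<alpha>: "\<alpha> \<ge> 0" "\<bar>\<alpha> - \<sigma>\<bar> \<le> \<bar>\<beta>\<bar> / sqrt (real N)" "\<alpha> \<le> \<sigma> + \<bar>\<beta>\<bar>"
    and x: "occupancy_profile C x"
  shows "(\<Sum>n\<in>{1..C}. real N * \<alpha> * (x (n - 1) ^ d - x n ^ d) *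
            (lyapunov C N \<pi> (x(n := x n + 1 / real N)) - lyapunov C N \<pi> x))
       + (\<Sum>n\<in>{1..C}. real n * real N * (x n - x (Suc n)) *
            (lyapunov C N \<pi> (x(n := x n - 1 / real N)) - lyapunov C N \<pi> x))
       \<le> drift_constant C d \<sigma> \<beta> - lyapunov C N \<pi> x"
proof -
  define e where "e = 1 / sqrt (real N)"
  define s where "s = smoothed_l1 C e \<pi> x"
  define \<phi> where "\<phi> n = (x n - \<pi> n) / smooth_abs e (x n - \<pi> n)" for n
  define a where "a n = real N * \<alpha> * (x (n - 1) ^ d - x n ^ d)" for n
  define b where "b n = real n * real N * (x n - x (Suc n))" for n
  define M where "M = real C * (1 + \<sigma> * real d + real C + \<bar>\<beta>\<bar>)"
  define L where "L = real C * (\<sigma> + \<bar>\<beta>\<bar> + real C)"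
  have N0: "real N > 0" using N by simp
  have e0: "e \<ge> 0" unfolding e_def by simp
  have s0: "s \<ge> 0" unfolding s_def by (rule smoothed_l1_nonneg)
  have ab: "0 \<le> a n" "a n \<le> real N * \<alpha>" "0 \<le> b n" "b n \<le> real N * real C" if n: "n \<in> {1..C}" for n
  proof -
    note diffs = occupancy_profile_diffs[OF x n]
    show "0 \<le> a n" "a n \<le> real N * \<alpha>"
      using diffs(1,2) N0 \<alpha>(1) unfolding a_def by (auto intro: mult_left_le)
    have "real n * (x n - x (Suc n)) \<le> real C * 1"
      using diffs(3,4) n by (intro mult_mono) auto
    then show "0 \<le> b n" "b n \<le> real N * real C"
      using diffs(3) N0 unfolding b_def by (simp_all add: mult.assoc)
  qed
  have "(\<Sum>n\<in>{1..C}. \<phi> n * (a n - b n))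
      = real N * (\<Sum>n\<in>{1..C}. \<phi> n * (\<alpha> * (x (n - 1) ^ d - x n ^ d) - real n * (x n - x (Suc n))))"
    unfolding sum_distrib_left a_def b_def by (rule sum.cong) (simp_all add: algebra_simps)
  also have "\<dots> \<le> real N * (- s + e * M)"
    using perturbed_drift_smooth_sign_le[OF e0 _ x, where \<alpha>=\<alpha> and \<beta>=\<beta>] \<alpha>(2) N0
    unfolding \<phi>_def s_def M_def e_def by (intro mult_left_mono) (simp_all add: mult.commute)
  finally have drift: "(\<Sum>n\<in>{1..C}. \<phi> n * (a n - b n)) \<le> real N * (- s + e * M)" .
  have "(\<Sum>n\<in>{1..C}. a n + b n) \<le> (\<Sum>n\<in>{1..C}. real N * (\<sigma> + \<bar>\<beta>\<bar> + real C))"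
  proof (rule sum_mono)
    fix n assume n: "n \<in> {1..C}"
    have "real N * \<alpha> \<le> real N * (\<sigma> + \<bar>\<beta>\<bar>)" using \<alpha>(3) N0 by simp
    with ab(2,4)[OF n] show "a n + b n \<le> real N * (\<sigma> + \<bar>\<beta>\<bar> + real C)"
      by (simp add: distrib_left)
  qed
  then have jumps: "(\<Sum>n\<in>{1..C}. a n + b n) \<le> real N * L" unfolding L_def by (simp add: mult.left_commute)
  have "(\<Sum>n\<in>{1..C}. a n * (lyapunov C N \<pi> (x(n := x n + 1 / real N)) - lyapunov C N \<pi> x))
      + (\<Sum>n\<in>{1..C}. b n * (lyapunov C N \<pi> (x(n := x n - 1 / real N)) - lyapunov C N \<pi> x))
      \<le> 2 * s * (\<Sum>n\<in>{1..C}. \<phi> n * (a n - b n)) + (e * s + e\<^sup>2) * (\<Sum>n\<in>{1..C}. a n + b n)"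
    using lyapunov_weighted_updates_le[OF N, where a=a and b=b and x=x and \<pi>=\<pi>] ab
    unfolding \<phi>_def s_def e_def by simp
  also have "\<dots> \<le> 2 * s * (real N * (- s + e * M)) + (e * s + e\<^sup>2) * (real N * L)"
    using drift jumps s0 e0 by (intro add_mono mult_left_mono) auto
  also have "\<dots> \<le> (L + 2 * M)\<^sup>2 / 4 + L - real N * s\<^sup>2"
    unfolding e_def by (rule drift_absorb_le[OF N0 s0])
  also have "\<dots> = drift_constant C d \<sigma> \<beta> - lyapunov C N \<pi> x"
    unfolding drift_constant_def lyapunov_def s_def e_def L_def M_def by simp
  finally show ?thesis unfolding a_def b_def by (simp add: mult.assoc)
qed

end

section \<open>The load-balancing chain\<close>

lemma statesD:
  assumes "m \<in> states C N"
  shows "m 0 = N" "m (Suc n) \<le> m n" "C < n \<Longrightarrow> m n = 0" "m n \<le> N"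
proof -
  show m0: "m 0 = N" and "C < n \<Longrightarrow> m n = 0" using assms by (simp_all add: states_def)
  have mono: "m (Suc k) \<le> m k" for k
    using assms unfolding states_def by (cases "k < C") auto
  then show "m (Suc n) \<le> m n" .
  show "m n \<le> N" using lift_Suc_antimono_le[of m 0 n, OF mono] m0 by simp
qed

lemma finite_states: "finite (states C N)"
proof -
  have "states C N \<subseteq> (\<lambda>f n. if n \<le> C then f n else 0) ` (PiE {..C} (\<lambda>_. {..N}))"
  proof
    fix m assume m: "m \<in> states C N"
    have "m = (\<lambda>n. if n \<le> C then restrict m {..C} n else 0)"
      using statesD(3)[OF m] by (auto simp: fun_eq_iff)
    moreover have "restrict m {..C} \<in> PiE {..C} (\<lambda>_. {..N})" using statesD(4)[OF m] by auto
    ultimately show "m \<in> (\<lambda>f n. if n \<le> C then f n else 0) ` (PiE {..C} (\<lambda>_. {..N}))" by blast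
  qed
  moreover have "finite (PiE {..C} (\<lambda>_. {..N::nat}))" by (intro finite_PiE) auto
  ultimately show ?thesis by (rule finite_subset[OF _ finite_imageI])
qed

lemma arrival_in_states:
  assumes m: "m \<in> states C N" and n: "n \<in> {1..C}" and lt: "m n < m (n - 1)"
  shows "m(n := Suc (m n)) \<in> states C N"
proof -
  have "(m(n := Suc (m n))) (Suc k) \<le> (m(n := Suc (m n))) k" for k
    using statesD(2)[OF m, of k] lt by (cases "Suc k = n"; cases "k = n") auto
  then show ?thesis using m n unfolding states_def by auto
qed

lemma departure_in_states:
  assumes m: "m \<in> states C N" and n: "n \<in> {1..C}" and lt: "m (Suc n) < m n"
  shows "m(n := m n - 1) \<in> states C N"
proof -
  have "(m(n := m n - 1)) (Suc k) \<le> (m(n := m n - 1)) k" for k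
    using statesD(2)[OF m, of k] statesD(2)[OF m, of "k - 1"] lt
    by (cases "Suc k = n"; cases "k = n") auto
  then show ?thesis using m n unfolding states_def by auto
qed

lemma rate_nonneg:
  assumes m: "m \<in> states C N" and lam: "lam \<sigma> \<beta> N > 0"
  shows "rate C d \<sigma> \<beta> N m m' \<ge> 0"
proof -
  have "(real (m n) / real N) ^ d \<le> (real (m (n - 1)) / real N) ^ d" if "n \<ge> 1" for n
    using statesD(2)[OF m, of "n - 1"] that by (intro power_mono divide_right_mono) auto
  then show ?thesis unfolding rate_def using lam
    by (intro add_nonneg_nonneg sum_nonneg) (auto intro!: mult_nonneg_nonneg)
qed

lemma sum_single_transition:
  fixes F :: "'a \<Rightarrow> real"
  assumes "finite S" and "P \<Longrightarrow> t \<in> S" and "\<not> P \<Longrightarrow> c = 0"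
  shows "(\<Sum>m'\<in>S. (if P \<and> m' = t then c else 0) * F m') = c * F t"
proof -
  have "(\<Sum>m'\<in>S. (if P \<and> m' = t then c else 0) * F m') = (\<Sum>m'\<in>S. if m' = t then c * F t else 0)"
    using assms(3) by (intro sum.cong) auto
  also have "\<dots> = c * F t"
    using assms by (cases P) (simp_all add: sum.delta)
  finally show ?thesis .
qed

lemma generator_rate_eq:
  assumes m: "m \<in> states C N"
  shows "generator (states C N) (rate C d \<sigma> \<beta> N) f m =
      (\<Sum>n\<in>{1..C}. real N * lam \<sigma> \<beta> N * ((real (m (n - 1)) / real N) ^ d - (real (m n) / real N) ^ d)
                   * (f (m(n := Suc (m n))) - f m))
    + (\<Sum>n\<in>{1..C}. real n * (real (m n) - real (m (Suc n))) * (f (m(n := m n - 1)) - f m))"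
proof -
  define S where "S = states C N"
  define F where "F m' = f m' - f m" for m'
  define up where "up n = real N * lam \<sigma> \<beta> N * ((real (m (n - 1)) / real N) ^ d - (real (m n) / real N) ^ d)" for n
  define down where "down n = real n * (real (m n) - real (m (Suc n)))" for n
  have fin: "finite S" unfolding S_def by (rule finite_states)
  have "generator S (rate C d \<sigma> \<beta> N) f m
     = (\<Sum>m'\<in>S. (\<Sum>n\<in>{1..C}. (if m n < m (n - 1) \<and> m' = m(n := Suc (m n)) then up n else 0) * F m')
              + (\<Sum>n\<in>{1..C}. (if m (Suc n) < m n \<and> m' = m(n := m n - 1) then down n else 0) * F m'))"
    unfolding generator_def rate_def up_def down_def F_def
    by (intro sum.cong refl) (simp only: mult.commute[of "rate C d \<sigma> \<beta> N m _"] distrib_right sum_distrib_right)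
  also have "\<dots> = (\<Sum>n\<in>{1..C}. \<Sum>m'\<in>S. (if m n < m (n - 1) \<and> m' = m(n := Suc (m n)) then up n else 0) * F m')
              + (\<Sum>n\<in>{1..C}. \<Sum>m'\<in>S. (if m (Suc n) < m n \<and> m' = m(n := m n - 1) then down n else 0) * F m')"
    by (simp only: sum.distrib) (rule arg_cong2[where f="(+)"]; rule sum.swap)
  also have "\<dots> = (\<Sum>n\<in>{1..C}. up n * F (m(n := Suc (m n)))) + (\<Sum>n\<in>{1..C}. down n * F (m(n := m n - 1)))"
  proof (intro arg_cong2[where f="(+)"] sum.cong refl sum_single_transition[OF fin])
    fix n assume n: "n \<in> {1..C}"
    show "m(n := Suc (m n)) \<in> S" if "m n < m (n - 1)"
      using arrival_in_states[OF m n that] unfolding S_def .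
    show "m(n := m n - 1) \<in> S" if "m (Suc n) < m n"
      using departure_in_states[OF m n that] unfolding S_def .
    show "up n = 0" if "\<not> m n < m (n - 1)"
      using statesD(2)[OF m, of "n - 1"] that n unfolding up_def by simp
    show "down n = 0" if "\<not> m (Suc n) < m n"
      using statesD(2)[OF m, of n] that unfolding down_def by simp
  qed
  finally show ?thesis unfolding S_def F_def up_def down_def .
qed

definition occupancy :: "nat \<Rightarrow> (nat \<Rightarrow> nat) \<Rightarrow> nat \<Rightarrow> real" where
  "occupancy N m n = real (m n) / real N"

lemma occupancy_profile_occupancy:
  assumes N: "N \<ge> 1" and m: "m \<in> states C N"
  shows "occupancy_profile C (occupancy N m)"
  using statesD[OF m] N unfolding occupancy_profile_def occupancy_def
  by (auto simp: divide_right_mono)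

lemma lam_bounds:
  assumes N: "N \<ge> 1"
  shows "\<bar>lam \<sigma> \<beta> N - \<sigma>\<bar> \<le> \<bar>\<beta>\<bar> / sqrt (real N)" "lam \<sigma> \<beta> N \<le> \<sigma> + \<bar>\<beta>\<bar>"
proof -
  have sqrt_N: "sqrt (real N) \<ge> 1" using N by simp
  show "\<bar>lam \<sigma> \<beta> N - \<sigma>\<bar> \<le> \<bar>\<beta>\<bar> / sqrt (real N)" unfolding lam_def by (simp add: abs_div)
  have "- \<beta> / sqrt (real N) \<le> \<bar>\<beta>\<bar> / sqrt (real N)" using sqrt_N by (intro divide_right_mono) auto
  also have "\<dots> \<le> \<bar>\<beta>\<bar>" using sqrt_N by (simp add: divide_le_eq mult_le_cancel_left1)
  finally show "lam \<sigma> \<beta> N \<le> \<sigma> + \<bar>\<beta>\<bar>" unfolding lam_def by simp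
qed

lemma (in mean_field_fixed_point) generator_lyapunov_le:
  assumes N: "N \<ge> 1" and lam: "lam \<sigma> \<beta> N > 0" and m: "m \<in> states C N"
  shows "generator (states C N) (rate C d \<sigma> \<beta> N) (\<lambda>m. lyapunov C N \<pi> (occupancy N m)) m
         \<le> drift_constant C d \<sigma> \<beta> - lyapunov C N \<pi> (occupancy N m)"
proof -
  define x where "x = occupancy N m"
  define V where "V y = lyapunov C N \<pi> y" for y
  have N0: "real N > 0" using N by simp
  have arrival: "occupancy N (m(n := Suc (m n))) = x(n := x n + 1 / real N)" for n
    unfolding x_def occupancy_def by (auto simp: fun_eq_iff add_divide_distrib)
  have departure: "real n * (real (m n) - real (m (Suc n))) * (V (occupancy N (m(n := m n - 1))) - V x)
      = real n * real N * (x n - x (Suc n)) * (V (x(n := x n - 1 / real N)) - V x)" for n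
  proof (cases "m (Suc n) < m n")
    case True
    then have "occupancy N (m(n := m n - 1)) = x(n := x n - 1 / real N)"
      unfolding x_def occupancy_def by (auto simp: fun_eq_iff diff_divide_distrib of_nat_diff)
    then show ?thesis unfolding x_def occupancy_def using N0 by (simp add: field_simps)
  next
    case False
    then have "m (Suc n) = m n" using statesD(2)[OF m, of n] by simp
    then show ?thesis unfolding x_def occupancy_def by simp
  qed
  have "generator (states C N) (rate C d \<sigma> \<beta> N) (\<lambda>m. V (occupancy N m)) m
     = (\<Sum>n\<in>{1..C}. real N * lam \<sigma> \<beta> N * (x (n - 1) ^ d - x n ^ d) * (V (x(n := x n + 1 / real N)) - V x))
       + (\<Sum>n\<in>{1..C}. real n * real N * (x n - x (Suc n)) * (V (x(n := x n - 1 / real N)) - V x))"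
    unfolding generator_rate_eq[OF m] arrival x_def[symmetric] departure by (simp add: x_def occupancy_def)
  also have "\<dots> \<le> drift_constant C d \<sigma> \<beta> - V x"
    unfolding V_def
    using lyapunov_profile_drift_le[OF N less_imp_le[OF lam] lam_bounds[OF N]
        occupancy_profile_occupancy[OF N m]]
    unfolding x_def .
  finally show ?thesis unfolding V_def x_def .
qed

lemma sum_squares_le_square_sum:
  fixes a :: "'a \<Rightarrow> real"
  assumes "finite A" and "\<And>i. i \<in> A \<Longrightarrow> a i \<ge> 0"
  shows "(\<Sum>i\<in>A. (a i)\<^sup>2) \<le> (\<Sum>i\<in>A. a i)\<^sup>2"
proof -
  have "(\<Sum>i\<in>A. (a i)\<^sup>2) \<le> (\<Sum>i\<in>A. a i * (\<Sum>j\<in>A. a j))"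
  proof (rule sum_mono)
    fix i assume i: "i \<in> A"
    have "a i \<le> (\<Sum>j\<in>A. a j)" using assms i by (intro member_le_sum) auto
    then show "(a i)\<^sup>2 \<le> a i * (\<Sum>j\<in>A. a j)"
      using assms(2)[OF i] by (simp add: power2_eq_square mult_left_mono)
  qed
  also have "\<dots> = (\<Sum>i\<in>A. a i)\<^sup>2" by (simp add: power2_eq_square sum_distrib_right)
  finally show ?thesis .
qed

lemma sq_dev_lyapunov_bounds:
  fixes \<pi> :: "nat \<Rightarrow> real"
  assumes m: "m \<in> states C N" and N: "N \<ge> 1" and \<pi>0: "\<pi> 0 = 1"
  shows "sq_dev C \<pi> N m \<le> lyapunov C N \<pi> (occupancy N m)"
    and "lyapunov C N \<pi> (occupancy N m) \<le> real C * sq_dev C \<pi> N m + (real C)\<^sup>2"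
proof -
  define u where "u n = occupancy N m n - \<pi> n" for n
  define r where "r n = smooth_abs (1 / sqrt (real N)) (u n)" for n
  have N0: "real N > 0" using N by simp
  have r2: "(r n)\<^sup>2 = (u n)\<^sup>2 + 1 / real N" for n
    unfolding r_def smooth_abs_def using N0 by (simp add: power_divide)
  have sq_dev: "sq_dev C \<pi> N m = real N * (\<Sum>n\<in>{1..C}. (u n)\<^sup>2)"
  proof -
    have "u 0 = 0" unfolding u_def occupancy_def using statesD(1)[OF m] \<pi>0 N0 by simp
    moreover have "{..C} = insert 0 {1..C}" by auto
    ultimately show ?thesis unfolding sq_dev_def u_def occupancy_def by simp
  qed
  have V: "lyapunov C N \<pi> (occupancy N m) = real N * (\<Sum>n\<in>{1..C}. r n)\<^sup>2"
    unfolding lyapunov_def smoothed_l1_def r_def u_def ..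
  have "(\<Sum>n\<in>{1..C}. (u n)\<^sup>2) \<le> (\<Sum>n\<in>{1..C}. (r n)\<^sup>2)"
    using N0 by (intro sum_mono) (simp add: r2)
  also have "\<dots> \<le> (\<Sum>n\<in>{1..C}. r n)\<^sup>2"
    by (rule sum_squares_le_square_sum) (auto simp: r_def smooth_abs_nonneg)
  finally show "sq_dev C \<pi> N m \<le> lyapunov C N \<pi> (occupancy N m)"
    unfolding sq_dev V using N0 by simp
  have "(\<Sum>n\<in>{1..C}. r n)\<^sup>2 \<le> (\<Sum>n\<in>{1..C}. (r n)\<^sup>2) * real C"
    using sum_squared_le_sum_of_squares[of r "{1..C}"] by simp
  also have "\<dots> = real C * (\<Sum>n\<in>{1..C}. (u n)\<^sup>2) + real C * real C / real N"
    by (simp add: r2 sum.distrib algebra_simps)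
  finally have "real N * (\<Sum>n\<in>{1..C}. r n)\<^sup>2
      \<le> real N * (real C * (\<Sum>n\<in>{1..C}. (u n)\<^sup>2) + real C * real C / real N)"
    using N0 by simp
  also have "\<dots> = real C * (real N * (\<Sum>n\<in>{1..C}. (u n)\<^sup>2)) + (real C)\<^sup>2"
    using N0 by (simp add: field_simps power2_eq_square)
  finally show "lyapunov C N \<pi> (occupancy N m) \<le> real C * sq_dev C \<pi> N m + (real C)\<^sup>2"
    unfolding sq_dev V .
qed

section \<open>Uniform moment bounds\<close>

lemma eventually_lam_pos:
  assumes \<sigma>: "\<sigma> > 0"
  shows "eventually (\<lambda>N. N \<ge> 1 \<and> lam \<sigma> \<beta> N > 0) sequentially"
proof -
  have "((\<lambda>N. \<beta> / sqrt (real N)) \<longlongrightarrow> 0) sequentially"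
    by (intro tendsto_divide_0[OF tendsto_const] filterlim_at_top_imp_at_infinity
        filterlim_compose[OF sqrt_at_top] filterlim_real_sequentially)
  then have "eventually (\<lambda>N. \<beta> / sqrt (real N) < \<sigma>) sequentially"
    using \<sigma> by (rule order_tendstoD)
  moreover have "eventually (\<lambda>N. N \<ge> (1::nat)) sequentially" by (rule eventually_ge_at_top)
  ultimately show ?thesis unfolding lam_def by eventually_elim simp
qed

lemma limsup_less_infinity_if_eventually_le:
  assumes "eventually (\<lambda>N. f N \<le> ereal B) sequentially"
  shows "limsup f < \<infinity>"
proof -
  have "ereal B < \<infinity>" by simp
  with Limsup_bounded[OF assms] show ?thesis by (rule order.strict_trans1)
qed

context mean_field_fixed_point
begin

lemma law_process_sq_dev_bound:
  assumes N: "N \<ge> 1" and lam: "lam \<sigma> \<beta> N > 0"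
    and \<mu>: "is_distr (states C N) \<mu>" and law: "law_process C d \<sigma> \<beta> N \<mu> p" and t: "t \<ge> 0"
  shows "expect (states C N) (p t) (sq_dev C \<pi> N)
      \<le> max (real C * expect (states C N) \<mu> (sq_dev C \<pi> N) + (real C)\<^sup>2) (drift_constant C d \<sigma> \<beta>)"
proof -
  define S where "S = states C N"
  define V where "V = (\<lambda>m. lyapunov C N \<pi> (occupancy N m))"
  have fin: "finite S" unfolding S_def by (rule finite_states)
  have rates: "\<And>a b. a \<in> S \<Longrightarrow> b \<in> S \<Longrightarrow> rate C d \<sigma> \<beta> N a b \<ge> 0"
    unfolding S_def using rate_nonneg[OF _ lam] by blast
  have fwd: "forward_equation S (rate C d \<sigma> \<beta> N) p" and p0: "p 0 = \<mu>"
    using law unfolding law_process_def forward_equation_def S_def by auto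
  have \<mu>_nonneg: "\<And>m. m \<in> S \<Longrightarrow> p 0 m \<ge> 0" and \<mu>_sum: "sum (p 0) S = 1"
    using \<mu> p0 unfolding is_distr_def S_def by auto
  have drift: "\<And>m. m \<in> S \<Longrightarrow> generator S (rate C d \<sigma> \<beta> N) V m \<le> drift_constant C d \<sigma> \<beta> - V m"
    unfolding S_def V_def by (rule generator_lyapunov_le[OF N lam])
  have "expect S (p t) (sq_dev C \<pi> N) \<le> (\<Sum>m\<in>S. p t m * V m)"
    unfolding expect_def V_def S_def
    using forward_equation_nonneg[OF fin rates fwd \<mu>_nonneg t] sq_dev_lyapunov_bounds(1)[where \<pi>=\<pi>, OF _ N \<pi>0]
    by (intro sum_mono mult_left_mono) (auto simp: S_def)
  also have "\<dots> \<le> max (\<Sum>m\<in>S. p 0 m * V m) (drift_constant C d \<sigma> \<beta>)"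
    by (rule forward_equation_lyapunov_bound[OF fin rates fwd \<mu>_nonneg \<mu>_sum drift t])
  also have "(\<Sum>m\<in>S. p 0 m * V m) \<le> (\<Sum>m\<in>S. p 0 m * (real C * sq_dev C \<pi> N m + (real C)\<^sup>2))"
    using \<mu>_nonneg sq_dev_lyapunov_bounds(2)[where \<pi>=\<pi>, OF _ N \<pi>0]
    by (intro sum_mono mult_left_mono) (auto simp: S_def V_def)
  also have "\<dots> = real C * expect S \<mu> (sq_dev C \<pi> N) + (real C)\<^sup>2"
    using \<mu>_sum unfolding expect_def p0
    by (simp add: sum.distrib sum_distrib_left algebra_simps flip: sum_distrib_right)
  finally show ?thesis unfolding S_def by simp
qed

lemma stationary_sq_dev_bound:
  assumes N: "N \<ge> 1" and lam: "lam \<sigma> \<beta> N > 0" and \<nu>: "stationary C d \<sigma> \<beta> N \<nu>"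
  shows "expect (states C N) \<nu> (sq_dev C \<pi> N) \<le> drift_constant C d \<sigma> \<beta>"
proof -
  define S where "S = states C N"
  define V where "V = (\<lambda>m. lyapunov C N \<pi> (occupancy N m))"
  have distr: "\<And>m. m \<in> S \<Longrightarrow> \<nu> m \<ge> 0" "sum \<nu> S = 1"
    and balance: "\<And>m. m \<in> S \<Longrightarrow> (\<Sum>m'\<in>S. \<nu> m' * rate C d \<sigma> \<beta> N m' m)
                                    = \<nu> m * (\<Sum>m'\<in>S. rate C d \<sigma> \<beta> N m m')"
    using \<nu> unfolding stationary_def is_distr_def S_def by auto
  have drift: "\<And>m. m \<in> S \<Longrightarrow> generator S (rate C d \<sigma> \<beta> N) V m \<le> drift_constant C d \<sigma> \<beta> - V m"
    unfolding S_def V_def by (rule generator_lyapunov_le[OF N lam])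
  have "expect S \<nu> (sq_dev C \<pi> N) \<le> (\<Sum>m\<in>S. \<nu> m * V m)"
    unfolding expect_def V_def using distr(1) sq_dev_lyapunov_bounds(1)[where \<pi>=\<pi>, OF _ N \<pi>0]
    by (intro sum_mono mult_left_mono) (auto simp: S_def)
  also have "\<dots> \<le> drift_constant C d \<sigma> \<beta>"
    by (rule stationary_lyapunov_bound[OF distr balance drift])
  finally show ?thesis unfolding S_def .
qed

lemma limsup_transient_sq_dev_finite:
  fixes \<mu> :: "nat \<Rightarrow> (nat \<Rightarrow> nat) \<Rightarrow> real" and p :: "nat \<Rightarrow> real \<Rightarrow> (nat \<Rightarrow> nat) \<Rightarrow> real"
  assumes law: "\<forall>N. N \<ge> 1 \<and> lam \<sigma> \<beta> N > 0 \<longrightarrow>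
                  is_distr (states C N) (\<mu> N) \<and> law_process C d \<sigma> \<beta> N (\<mu> N) (p N)"
    and init: "limsup (\<lambda>N. ereal (expect (states C N) (p N 0) (sq_dev C \<pi> N))) < \<infinity>"
  shows "limsup (\<lambda>N. SUP t\<in>{0..}. ereal (expect (states C N) (p N t) (sq_dev C \<pi> N))) < \<infinity>"
proof -
  define E0 where "E0 N = expect (states C N) (p N 0) (sq_dev C \<pi> N)" for N
  obtain c :: nat where "limsup (\<lambda>N. ereal (E0 N)) < ereal (real c)"
    using init less_PInf_Ex_of_nat unfolding E0_def by auto
  then have "eventually (\<lambda>N. ereal (E0 N) < ereal (real c)) sequentially"
    by (rule Limsup_lessD)
  with eventually_lam_pos[OF \<sigma>_pos, where \<beta>=\<beta>]
  have "eventually (\<lambda>N. (SUP t\<in>{0..}. ereal (expect (states C N) (p N t) (sq_dev C \<pi> N)))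
      \<le> ereal (max (real C * real c + (real C)\<^sup>2) (drift_constant C d \<sigma> \<beta>))) sequentially"
  proof eventually_elim
    case (elim N)
    then have N: "N \<ge> 1" and lam: "lam \<sigma> \<beta> N > 0" and E0_le: "E0 N \<le> real c" by auto
    have law_N: "is_distr (states C N) (\<mu> N)" "law_process C d \<sigma> \<beta> N (\<mu> N) (p N)"
      using law N lam by auto
    then have p0: "p N 0 = \<mu> N" unfolding law_process_def by simp
    show ?case
    proof (rule SUP_least)
      fix t :: real assume "t \<in> {0..}"
      then have "expect (states C N) (p N t) (sq_dev C \<pi> N)
          \<le> max (real C * E0 N + (real C)\<^sup>2) (drift_constant C d \<sigma> \<beta>)"
        unfolding E0_def p0 using law_process_sq_dev_bound[OF N lam law_N] by simp
      also have "\<dots> \<le> max (real C * real c + (real C)\<^sup>2) (drift_constant C d \<sigma> \<beta>)"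
        using E0_le by (intro max.mono add_right_mono mult_left_mono) auto
      finally show "ereal (expect (states C N) (p N t) (sq_dev C \<pi> N))
          \<le> ereal (max (real C * real c + (real C)\<^sup>2) (drift_constant C d \<sigma> \<beta>))"
        by (simp only: ereal_less_eq(3))
    qed
  qed
  then show ?thesis by (rule limsup_less_infinity_if_eventually_le)
qed

lemma limsup_stationary_sq_dev_finite:
  fixes \<nu> :: "nat \<Rightarrow> (nat \<Rightarrow> nat) \<Rightarrow> real"
  assumes stat: "\<forall>N. N \<ge> 1 \<and> lam \<sigma> \<beta> N > 0 \<longrightarrow> stationary C d \<sigma> \<beta> N (\<nu> N)"
  shows "limsup (\<lambda>N. ereal (expect (states C N) (\<nu> N) (sq_dev C \<pi> N))) < \<infinity>"
proof -
  from eventually_lam_pos[OF \<sigma>_pos, where \<beta>=\<beta>]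
  have "eventually (\<lambda>N. ereal (expect (states C N) (\<nu> N) (sq_dev C \<pi> N))
      \<le> ereal (drift_constant C d \<sigma> \<beta>)) sequentially"
  proof eventually_elim
    case (elim N)
    with stat show ?case by (simp add: stationary_sq_dev_bound)
  qed
  then show ?thesis by (rule limsup_less_infinity_if_eventually_le)
qed

end

theorem mainTheorem5:
  fixes C d :: nat and \<sigma> \<beta> :: real and \<pi> :: "nat \<Rightarrow> real"
  assumes C: "C \<ge> 1" and d: "d \<ge> 1" and \<sigma>: "\<sigma> > 0"
    and \<pi>0: "\<pi> 0 = 1"
    and \<pi>mono: "\<forall>n<C. \<pi> (Suc n) \<le> \<pi> n"
    and \<pi>nonneg: "\<pi> C \<ge> 0"
    and \<pi>top: "\<pi> (Suc C) = 0"
    and \<pi>fix: "\<forall>n\<in>{1..C}. \<sigma> * (\<pi> (n - 1) ^ d - \<pi> n ^ d) = real n * (\<pi> n - \<pi> (Suc n))"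
  shows
    "(\<forall>(\<mu> :: nat \<Rightarrow> (nat \<Rightarrow> nat) \<Rightarrow> real) (p :: nat \<Rightarrow> real \<Rightarrow> (nat \<Rightarrow> nat) \<Rightarrow> real).
        (\<forall>N. N \<ge> 1 \<and> lam \<sigma> \<beta> N > 0 \<longrightarrow>
               is_distr (states C N) (\<mu> N) \<and> law_process C d \<sigma> \<beta> N (\<mu> N) (p N)) \<and>
        limsup (\<lambda>N. ereal (expect (states C N) (p N 0) (sq_dev C \<pi> N))) < \<infinity>
        \<longrightarrow> limsup (\<lambda>N. SUP t\<in>{0..}. ereal (expect (states C N) (p N t) (sq_dev C \<pi> N))) < \<infinity>)
     \<and>
     (\<forall>\<nu> :: nat \<Rightarrow> (nat \<Rightarrow> nat) \<Rightarrow> real.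
        (\<forall>N. N \<ge> 1 \<and> lam \<sigma> \<beta> N > 0 \<longrightarrow> stationary C d \<sigma> \<beta> N (\<nu> N))
        \<longrightarrow> limsup (\<lambda>N. ereal (expect (states C N) (\<nu> N) (sq_dev C \<pi> N))) < \<infinity>)"
proof -
  interpret mean_field_fixed_point C d \<sigma> \<pi>
    using \<sigma> \<pi>0 \<pi>mono \<pi>nonneg \<pi>top \<pi>fix by unfold_locales
  show ?thesis
    using limsup_transient_sq_dev_finite limsup_stationary_sq_dev_finite by blast
qed

end
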